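(* Let $X$ and $Y$ be real Banach lattices (nonzero). The following are equivalent: (i) Every uniformly bounded subset $\mathscr{T}\subseteq\mathcal{L}(X,Y)$ is $\ell^2$-bounded. (ii) $X$ is $2$-concave and $Y$ is $2$-convex.
   Context: A family $\mathscr{T}\subseteq\mathcal{L}(X,Y)$ is uniformly bounded if $\sup_{T\in\mathscr{T}}\|T\|<\infty$. It is $\ell^2$-bounded if there is $C\ge0$ with $\|(\sum_{n=1}^N|T_nx_n|^2)^{1/2}\|\le C\|(\sum_{n=1}^N|x_n|^2)^{1/2}\|$ for all $N$, all $x_n\in X$ and all $T_n\in\mathscr{T}$ (square functions via Krivine's calculus). A Banach lattice $X$ is $2$-concave if there is $C_X$ with $(\sum_{n=1}^N\|x_n\|^2)^{1/2}\le C_X\|(\sum_{n=1}^N|x_n|^2)^{1/2}\|$ for all $N$ and $x_1,\dots,x_N\in X$; it is $2$-convex if $\|(\sum_{n=1}^N|x_n|^2)^{1/2}\|\le C_X(\sum_{n=1}^N\|x_n\|^2)^{1/2}$ for all such. *)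

theory Defs
  imports "HOL-Analysis.Analysis"
begin

text \<open>Real Banach lattices are modelled as types of sort
  {banach, ordered_real_vector, lattice} (a complete normed real vector space
  carrying a lattice order compatible with the vector operations, i.e. a Riesz
  space) satisfying the Banach lattice norm axiom below.\<close>

definition labs :: "'a::{ab_group_add, lattice} \<Rightarrow> 'a" where
  "labs x = sup x (- x)"

definition banach_lattice :: "'a::{banach, ordered_real_vector, lattice} itself \<Rightarrow> bool" where
  "banach_lattice _ \<longleftrightarrow> (\<forall>x y :: 'a. labs x \<le> labs y \<longrightarrow> norm x \<le> norm y)"

definition lub :: "'a::order set \<Rightarrow> 'a" where
  "lub S = (THE u. (\<forall>s\<in>S. s \<le> u) \<and> (\<forall>v. (\<forall>s\<in>S. s \<le> v) \<longrightarrow> u \<le> v))"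

text \<open>Square function (sum_{n<N} |x_n|^2)^(1/2), the Krivine calculus element,
  given by its standard description
  sup { sum_{n<N} a_n x_n : sum_{n<N} a_n^2 \<le> 1 }.\<close>
definition sqfun :: "nat \<Rightarrow> (nat \<Rightarrow> 'a::{banach, ordered_real_vector, lattice}) \<Rightarrow> 'a" where
  "sqfun N x = lub {(\<Sum>n<N. a n *\<^sub>R x n) | a. (\<Sum>n<N. (a n)\<^sup>2) \<le> 1}"

definition uniformly_bounded :: "('a::real_normed_vector \<Rightarrow>\<^sub>L 'b::real_normed_vector) set \<Rightarrow> bool" where
  "uniformly_bounded \<T> \<longleftrightarrow> (\<exists>M. \<forall>T\<in>\<T>. norm T \<le> M)"

definition l2_bounded ::
  "('a::{banach, ordered_real_vector, lattice} \<Rightarrow>\<^sub>L 'b::{banach, ordered_real_vector, lattice}) set \<Rightarrow> bool" where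
  "l2_bounded \<T> \<longleftrightarrow> (\<exists>C\<ge>0. \<forall>N (x :: nat \<Rightarrow> 'a) (T :: nat \<Rightarrow> ('a \<Rightarrow>\<^sub>L 'b)).
      (\<forall>n<N. T n \<in> \<T>) \<longrightarrow>
      norm (sqfun N (\<lambda>n. blinfun_apply (T n) (x n))) \<le> C * norm (sqfun N x))"

definition two_concave :: "'a::{banach, ordered_real_vector, lattice} itself \<Rightarrow> bool" where
  "two_concave _ \<longleftrightarrow> (\<exists>C. \<forall>N (x :: nat \<Rightarrow> 'a).
      sqrt (\<Sum>n<N. (norm (x n))\<^sup>2) \<le> C * norm (sqfun N x))"

definition two_convex :: "'a::{banach, ordered_real_vector, lattice} itself \<Rightarrow> bool" where
  "two_convex _ \<longleftrightarrow> (\<exists>C. \<forall>N (x :: nat \<Rightarrow> 'a).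
      norm (sqfun N x) \<le> C * sqrt (\<Sum>n<N. (norm (x n))\<^sup>2))"

end

theory Submission
  imports Defs
begin

text \<open>Direction (ii) \<Longrightarrow> (i) is a chain of three estimates: 2-convexity of \<open>Y\<close>, the uniform bound
  \<open>\<parallel>T\<^sub>n x\<^sub>n\<parallel> \<le> M \<parallel>x\<^sub>n\<parallel>\<close>, and 2-concavity of \<open>X\<close>. For (i) \<Longrightarrow> (ii), apply \<open>\<ell>\<^sup>2\<close>-boundedness to the
  uniformly bounded family of rank-one operators \<open>x \<mapsto> f(x) y\<close> with \<open>\<parallel>f\<parallel>, \<parallel>y\<parallel> \<le> 1\<close>. For a positive
  unit vector \<open>u\<close> the square function of \<open>(c\<^sub>n u)\<^sub>n\<close> is \<open>(\<Sum>c\<^sub>n\<^sup>2)\<^sup>1\<^sup>/\<^sup>2 u\<close>, whose norm is the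
  \<open>\<ell>\<^sup>2\<close>-norm of \<open>c\<close>. Taking \<open>T\<^sub>n x = f\<^sub>n(x) v\<close> with Hahn--Banach norming functionals \<open>f\<^sub>n\<close> of \<open>x\<^sub>n\<close>
  turns \<open>\<ell>\<^sup>2\<close>-boundedness into 2-concavity of \<open>X\<close>; writing \<open>y\<^sub>n = T\<^sub>n(\<parallel>y\<^sub>n\<parallel> u)\<close> turns it into
  2-convexity of \<open>Y\<close>.\<close>

definition sublinear :: "('a::real_vector \<Rightarrow> real) \<Rightarrow> bool" where
  "sublinear p \<longleftrightarrow> (\<forall>x y. p (x + y) \<le> p x + p y) \<and> (\<forall>c x. 0 \<le> c \<longrightarrow> p (c *\<^sub>R x) = c * p x)"

lemma sublinear_norm: "sublinear norm"
  by (simp add: sublinear_def norm_triangle_ineq)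

lemma sublinearD:
  assumes "sublinear p"
  shows sublinear_add: "p (x + y) \<le> p x + p y"
    and sublinear_scaleR: "0 \<le> c \<Longrightarrow> p (c *\<^sub>R x) = c * p x"
  using assms by (auto simp: sublinear_def)

lemma sublinear_zero: "sublinear p \<Longrightarrow> p 0 = 0"
  using sublinear_scaleR[of p 0 0] by simp

text \<open>A linear functional on a subspace, dominated by \<open>p\<close>, is represented by its graph, a subspace
  of \<open>'a \<times> real\<close>; domination already forces the graph to be single-valued.\<close>
definition dominated_graph :: "('a::real_vector \<Rightarrow> real) \<Rightarrow> ('a \<times> real) set \<Rightarrow> bool" where
  "dominated_graph p G \<longleftrightarrow> subspace G \<and> (\<forall>(x, a) \<in> G. a \<le> p x)"

lemma dominated_graphD:
  assumes "dominated_graph p G"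
  shows dominated_graph_subspace: "subspace G"
    and dominated_graph_le: "(x, a) \<in> G \<Longrightarrow> a \<le> p x"
  using assms by (auto simp: dominated_graph_def)

lemma dominated_graph_unique:
  assumes "sublinear p" "dominated_graph p G" "(x, a) \<in> G" "(x, b) \<in> G"
  shows "a = b"
proof -
  have "(0, a - b) \<in> G" "(0, b - a) \<in> G"
    using subspace_diff[OF dominated_graph_subspace[OF assms(2)]] assms(3,4) by force+
  then have "a - b \<le> 0" "b - a \<le> 0"
    using dominated_graph_le[OF assms(2)] sublinear_zero[OF assms(1)] by fastforce+
  then show ?thesis by simp
qed

lemma subspace_Union_chain:
  assumes "C \<noteq> {}" "chain\<^sub>\<subseteq> C" "\<And>S. S \<in> C \<Longrightarrow> subspace S"
  shows "subspace (\<Union>C)"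
  unfolding subspace_def
proof (intro conjI ballI allI)
  show "0 \<in> \<Union>C" using assms(1,3) subspace_0 by blast
next
  fix x y assume "x \<in> \<Union>C" "y \<in> \<Union>C"
  then obtain S T where "S \<in> C" "T \<in> C" "x \<in> S" "y \<in> T" by blast
  with assms(2) consider "x \<in> T" | "y \<in> S"
    unfolding chain_subset_def by blast
  then show "x + y \<in> \<Union>C"
    by cases (use \<open>S \<in> C\<close> \<open>T \<in> C\<close> \<open>x \<in> S\<close> \<open>y \<in> T\<close> assms(3) subspace_add in blast)+
next
  fix c x assume "x \<in> \<Union>C"
  then show "c *\<^sub>R x \<in> \<Union>C" using assms(3) subspace_scale by blast
qed

lemma dominated_graph_Union_chain:
  assumes "C \<noteq> {}" "chain\<^sub>\<subseteq> C" "\<And>G. G \<in> C \<Longrightarrow> dominated_graph p G"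
  shows "dominated_graph p (\<Union>C)"
  using subspace_Union_chain[OF assms(1,2)] assms(3)
  by (fastforce simp: dominated_graph_def)

text \<open>The one-dimensional step of the Hahn--Banach argument: a value \<open>c\<close> for the new direction \<open>z\<close>
  exists because \<open>a + b \<le> p (x + y) \<le> p (x - z) + p (y + z)\<close> for all \<open>(x, a), (y, b) \<in> G\<close>.\<close>
lemma dominated_graph_extension_value:
  assumes "sublinear p" "dominated_graph p G"
  obtains c where "\<And>x a. (x, a) \<in> G \<Longrightarrow> a - p (x - z) \<le> c"
    and "\<And>y b. (y, b) \<in> G \<Longrightarrow> c \<le> p (y + z) - b"
proof
  define S where "S = {a - p (x - z) | x a. (x, a) \<in> G}"
  have sep: "a + b \<le> p (x - z) + p (y + z)" if "(x, a) \<in> G" "(y, b) \<in> G" for x a y b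
  proof -
    have "(x + y, a + b) \<in> G"
      using subspace_add[OF dominated_graph_subspace[OF assms(2)] that] by simp
    then have "a + b \<le> p ((x - z) + (y + z))" using dominated_graph_le[OF assms(2)] by simp
    also have "\<dots> \<le> p (x - z) + p (y + z)" by (rule sublinear_add[OF assms(1)])
    finally show ?thesis .
  qed
  have "(0, 0) \<in> G" using subspace_0[OF dominated_graph_subspace[OF assms(2)]] unfolding zero_prod_def .
  then have ne: "S \<noteq> {}" unfolding S_def by blast
  have bound: "s \<le> p (y + z) - b" if "s \<in> S" "(y, b) \<in> G" for s y b
    using that sep unfolding S_def by fastforce
  show "a - p (x - z) \<le> Sup S" if "(x, a) \<in> G" for x a
    using that bound[OF _ \<open>(0, 0) \<in> G\<close>] unfolding S_def
    by (intro cSup_upper) (auto simp: bdd_above_def)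
  show "Sup S \<le> p (y + z) - b" if "(y, b) \<in> G" for y b
    using ne bound[OF _ that] by (rule cSup_least)
qed

text \<open>For \<open>t \<noteq> 0\<close>, scaling \<open>(x, a)\<close> by \<open>1 / \<bar>t\<bar>\<close> reduces the claim to the two bounds on \<open>c\<close>.\<close>
lemma dominated_graph_extension_le:
  assumes p: "sublinear p" and G: "dominated_graph p G"
    and lower: "\<And>x a. (x, a) \<in> G \<Longrightarrow> a - p (x - z) \<le> c"
    and upper: "\<And>x a. (x, a) \<in> G \<Longrightarrow> c \<le> p (x + z) - a"
    and xa: "(x, a) \<in> G"
  shows "a + t * c \<le> p (x + t *\<^sub>R z)"
proof (cases t "0 :: real" rule: linorder_cases)
  case less
  have "(1 / - t) *\<^sub>R (x, a) \<in> G"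
    using subspace_scale[OF dominated_graph_subspace[OF G] xa] .
  then have "a / - t - p ((1 / - t) *\<^sub>R x - z) \<le> c" using lower by simp
  moreover have "p (x + t *\<^sub>R z) = - t * p ((1 / - t) *\<^sub>R x - z)"
    using sublinear_scaleR[OF p, of "- t" "(1 / - t) *\<^sub>R x - z"] less
    by (simp add: algebra_simps)
  ultimately show ?thesis using less by (simp add: field_simps)
next
  case equal
  then show ?thesis using dominated_graph_le[OF G xa] by simp
next
  case greater
  have "(1 / t) *\<^sub>R (x, a) \<in> G"
    using subspace_scale[OF dominated_graph_subspace[OF G] xa] .
  then have "c \<le> p ((1 / t) *\<^sub>R x + z) - a / t" using upper by simp
  moreover have "p (x + t *\<^sub>R z) = t * p ((1 / t) *\<^sub>R x + z)"
    using sublinear_scaleR[OF p, of t "(1 / t) *\<^sub>R x + z"] greater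
    by (simp add: algebra_simps)
  ultimately show ?thesis using greater by (simp add: field_simps)
qed

lemma dominated_graph_extend:
  assumes p: "sublinear p" and G: "dominated_graph p G" and z: "z \<notin> fst ` G"
  obtains G' where "dominated_graph p G'" "G \<subset> G'"
proof -
  obtain c where lower: "\<And>x a. (x, a) \<in> G \<Longrightarrow> a - p (x - z) \<le> c"
    and upper: "\<And>x a. (x, a) \<in> G \<Longrightarrow> c \<le> p (x + z) - a"
    using dominated_graph_extension_value[OF p G] by blast
  define G' where "G' = {g + w | g w. g \<in> G \<and> w \<in> span {(z, c)}}"
  have "subspace G'"
    unfolding G'_def using dominated_graph_subspace[OF G] by (intro subspace_sums) auto
  moreover have "\<forall>(y, b) \<in> G'. b \<le> p y"
  proof (clarify)
    fix y b assume "(y, b) \<in> G'"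
    then obtain x a t where "(x, a) \<in> G" "y = x + t *\<^sub>R z" "b = a + t * c"
      unfolding G'_def span_singleton by auto
    then show "b \<le> p y" using dominated_graph_extension_le[OF p G lower upper] by simp
  qed
  ultimately have "dominated_graph p G'" by (simp add: dominated_graph_def)
  moreover have "G \<subseteq> G'"
  proof
    fix g assume "g \<in> G"
    then show "g \<in> G'"
      unfolding G'_def by (intro CollectI exI[of _ g] exI[of _ 0]) (simp add: span_zero)
  qed
  moreover have "(z, c) \<in> G'"
    unfolding G'_def using subspace_0[OF dominated_graph_subspace[OF G]]
    by (intro CollectI exI[of _ 0] exI[of _ "(z, c)"]) (simp add: span_base)
  moreover have "(z, c) \<notin> G" using z by force
  ultimately show ?thesis using that by blast
qed

lemma maximal_dominated_graph:
  assumes p: "sublinear p" and G: "dominated_graph p G"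
  obtains M where "dominated_graph p M" "G \<subseteq> M" "fst ` M = UNIV"
proof -
  define A where "A = {H. dominated_graph p H \<and> G \<subseteq> H}"
  have "\<exists>U\<in>A. \<forall>H\<in>C. H \<subseteq> U" if C: "C \<in> chains A" for C
  proof (cases "C = {}")
    case True
    then show ?thesis using G by (auto simp: A_def)
  next
    case False
    have "dominated_graph p (\<Union>C)"
      using C False by (intro dominated_graph_Union_chain) (auto simp: chains_def A_def)
    moreover have "G \<subseteq> \<Union>C" using C False by (auto simp: chains_def A_def)
    ultimately show ?thesis by (auto simp: A_def)
  qed
  then have "\<exists>M\<in>A. \<forall>H\<in>A. M \<subseteq> H \<longrightarrow> H = M" by (intro Zorn_Lemma2) blast
  then obtain M where M: "M \<in> A" and maximal: "\<And>H. H \<in> A \<Longrightarrow> M \<subseteq> H \<Longrightarrow> H = M"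
    by blast
  have "x \<in> fst ` M" for x
  proof (rule ccontr)
    assume "x \<notin> fst ` M"
    moreover have "dominated_graph p M" using M by (simp add: A_def)
    ultimately obtain H where "dominated_graph p H" "M \<subset> H"
      using dominated_graph_extend[OF p] by blast
    then show False using M maximal[of H] by (auto simp: A_def)
  qed
  then have "fst ` M = UNIV" by blast
  with M show ?thesis using that by (auto simp: A_def)
qed

lemma dominated_graph_total_imp_linear:
  assumes p: "sublinear p" and M: "dominated_graph p M" and total: "fst ` M = UNIV"
  obtains g where "linear g" "\<And>x. g x \<le> p x" "\<And>x a. (x, a) \<in> M \<Longrightarrow> g x = a"
proof
  define g where "g x = (THE a. (x, a) \<in> M)" for x
  show graph: "g x = a" if "(x, a) \<in> M" for x a
    unfolding g_def using that dominated_graph_unique[OF p M] by blast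
  have in_M: "(x, g x) \<in> M" for x
  proof -
    have "x \<in> fst ` M" using total by simp
    then obtain a where "(x, a) \<in> M" by force
    with graph show ?thesis by simp
  qed
  have sub: "subspace M" using M by (rule dominated_graph_subspace)
  show "linear g"
  proof (rule linearI)
    show "g (x + y) = g x + g y" for x y
      using subspace_add[OF sub in_M[of x] in_M[of y]] graph by simp
    show "g (c *\<^sub>R x) = c *\<^sub>R g x" for c x
      using subspace_scale[OF sub in_M[of x], of c] graph by simp
  qed
  show "g x \<le> p x" for x
    using dominated_graph_le[OF M in_M] .
qed

theorem hahn_banach:
  assumes "sublinear p" "dominated_graph p G"
  obtains g where "linear g" "\<And>x. g x \<le> p x" "\<And>x a. (x, a) \<in> G \<Longrightarrow> g x = a"
proof -
  obtain M where M: "dominated_graph p M" "G \<subseteq> M" "fst ` M = UNIV"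
    using maximal_dominated_graph[OF assms] .
  obtain g where "linear g" "\<And>x. g x \<le> p x" "\<And>x a. (x, a) \<in> M \<Longrightarrow> g x = a"
    using dominated_graph_total_imp_linear[OF assms(1) M(1,3)] by blast
  with M(2) show ?thesis using that by blast
qed

corollary norming_functional:
  fixes x0 :: "'a::real_normed_vector"
  obtains f :: "'a \<Rightarrow>\<^sub>L real" where "norm f \<le> 1" "f x0 = norm x0"
proof -
  have "\<forall>(x, a) \<in> span {(x0, norm x0)}. a \<le> norm x"
    by (auto simp: span_singleton abs_mult mult_right_mono)
  then have "dominated_graph norm (span {(x0, norm x0)})"
    by (simp add: dominated_graph_def)
  then obtain g where g: "linear g" "\<And>x. g x \<le> norm x"
    and extends: "\<And>x a. (x, a) \<in> span {(x0, norm x0)} \<Longrightarrow> g x = a"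
    using hahn_banach[OF sublinear_norm] by blast
  have "g x0 = norm x0" by (rule extends) (simp add: span_base)
  have abs_le: "\<bar>g x\<bar> \<le> norm x" for x
    using g(2)[of x] g(2)[of "- x"] linear_neg[OF g(1), of x] by simp
  have "bounded_linear g"
    using abs_le linear_add[OF g(1)] linear_scale[OF g(1)] by (intro bounded_linear_intro[where K = 1]) auto
  then have "blinfun_apply (Blinfun g) = g" by (rule bounded_linear_Blinfun_apply)
  then show ?thesis
    using that[of "Blinfun g"] abs_le \<open>g x0 = norm x0\<close> by (simp add: norm_blinfun_bound)
qed

lemma sum_mult_le_L2_set:
  assumes "(\<Sum>n\<in>A. (a n)\<^sup>2) \<le> 1"
  shows "(\<Sum>n\<in>A. a n * c n) \<le> L2_set c A"
proof -
  have "(\<Sum>n\<in>A. a n * c n) \<le> (\<Sum>n\<in>A. \<bar>a n\<bar> * \<bar>c n\<bar>)"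
    by (intro sum_mono) (simp add: abs_mult[symmetric])
  also have "\<dots> \<le> L2_set a A * L2_set c A" by (rule L2_set_mult_ineq)
  also have "\<dots> \<le> 1 * L2_set c A"
    using assms by (intro mult_right_mono) (auto simp: L2_set_def sum_nonneg)
  finally show ?thesis by simp
qed

text \<open>For \<open>L2_set c A = 0\<close> the maximiser \<open>c / L2_set c A\<close> degenerates to \<open>0\<close> (division by zero),
  which still works.\<close>
lemma L2_set_attained:
  fixes c :: "'a \<Rightarrow> real"
  assumes "finite A"
  defines "a \<equiv> \<lambda>n. c n / L2_set c A"
  shows "(\<Sum>n\<in>A. (a n)\<^sup>2) \<le> 1" and "(\<Sum>n\<in>A. a n * c n) = L2_set c A"
proof -
  have sq: "(L2_set c A)\<^sup>2 = (\<Sum>n\<in>A. (c n)\<^sup>2)"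
    unfolding L2_set_def by (simp add: sum_nonneg)
  show "(\<Sum>n\<in>A. (a n)\<^sup>2) \<le> 1"
    using sq by (cases "L2_set c A = 0") (simp_all add: a_def power_divide flip: sum_divide_distrib)
  show "(\<Sum>n\<in>A. a n * c n) = L2_set c A"
    using sq by (cases "L2_set c A = 0")
      (simp_all add: a_def power2_eq_square flip: sum_divide_distrib, simp add: field_simps)
qed

lemma lub_eqI:
  fixes A :: "'a::order set"
  assumes "m \<in> A" "\<And>s. s \<in> A \<Longrightarrow> s \<le> m"
  shows "lub A = m"
  unfolding lub_def using assms by (intro the_equality) (auto intro: antisym)

lemma sqfun_scaleR_nonneg:
  fixes u :: "'a::{banach, ordered_real_vector, lattice}"
  assumes "0 \<le> u"
  shows "sqfun N (\<lambda>n. c n *\<^sub>R u) = L2_set c {..<N} *\<^sub>R u"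
proof -
  have combination: "(\<Sum>n<N. a n *\<^sub>R (c n *\<^sub>R u)) = (\<Sum>n<N. a n * c n) *\<^sub>R u" for a
    by (simp add: scaleR_sum_left)
  show ?thesis
    unfolding sqfun_def combination
  proof (rule lub_eqI)
    show "L2_set c {..<N} *\<^sub>R u \<in> {(\<Sum>n<N. a n * c n) *\<^sub>R u | a. (\<Sum>n<N. (a n)\<^sup>2) \<le> 1}"
      using L2_set_attained[of "{..<N}" c] by (intro CollectI exI) auto
    show "s \<le> L2_set c {..<N} *\<^sub>R u"
      if "s \<in> {(\<Sum>n<N. a n * c n) *\<^sub>R u | a. (\<Sum>n<N. (a n)\<^sup>2) \<le> 1}" for s
      using that sum_mult_le_L2_set assms by (auto intro: scaleR_right_mono)
  qed
qed

lemma labs_nonneg: "0 \<le> labs (x :: 'a::{ordered_real_vector, lattice})"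
proof -
  have "0 \<le> labs x + labs x"
    using add_mono[of x "labs x" "- x" "labs x"] by (simp add: labs_def)
  then have "0 \<le> (1 / 2 :: real) *\<^sub>R (labs x + labs x)" by (rule scaleR_nonneg_nonneg[rotated]) simp
  also have "(1 / 2 :: real) *\<^sub>R (labs x + labs x) = labs x"
    by (simp flip: scaleR_2)
  finally show ?thesis .
qed

lemma labs_eq_0_iff: "labs (x :: 'a::{ordered_real_vector, lattice}) = 0 \<longleftrightarrow> x = 0"
proof
  assume "labs x = 0"
  moreover have "x \<le> labs x" "- x \<le> labs x" unfolding labs_def by simp_all
  ultimately have "x \<le> 0" "0 \<le> x" by simp_all
  then show "x = 0" by (rule antisym)
qed (simp add: labs_def)

lemma exists_nonneg_unit_vector:
  fixes x :: "'a::{real_normed_vector, ordered_real_vector, lattice}"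
  assumes "x \<noteq> 0"
  obtains u :: 'a where "0 \<le> u" "norm u = 1"
proof (rule that)
  show "0 \<le> (1 / norm (labs x)) *\<^sub>R labs x"
    by (simp add: labs_nonneg scaleR_nonneg_nonneg)
  show "norm ((1 / norm (labs x)) *\<^sub>R labs x) = 1"
    using assms by (simp add: labs_eq_0_iff)
qed

definition rank_one :: "('a::real_normed_vector \<Rightarrow>\<^sub>L real) \<Rightarrow> 'b::real_normed_vector \<Rightarrow> 'a \<Rightarrow>\<^sub>L 'b" where
  "rank_one f y = blinfun_scaleR_left y o\<^sub>L f"

lemma rank_one_apply [simp]: "rank_one f y x = f x *\<^sub>R y"
  by (simp add: rank_one_def)

lemma norm_rank_one_le: "norm (rank_one f y) \<le> norm f * norm y"
proof (rule norm_blinfun_bound)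
  have "\<bar>f x\<bar> * norm y \<le> norm f * norm x * norm y" for x
    using norm_blinfun[of f x] by (simp add: mult_right_mono)
  then show "norm (rank_one f y x) \<le> norm f * norm y * norm x" for x
    by (simp add: algebra_simps)
qed simp

definition unit_rank_one_operators :: "('a::real_normed_vector \<Rightarrow>\<^sub>L 'b::real_normed_vector) set" where
  "unit_rank_one_operators = {rank_one f y | f y. norm f \<le> 1 \<and> norm y \<le> 1}"

lemma rank_one_in_unit_rank_one_operators:
  "norm f \<le> 1 \<Longrightarrow> norm y \<le> 1 \<Longrightarrow> rank_one f y \<in> unit_rank_one_operators"
  by (auto simp: unit_rank_one_operators_def)

lemma uniformly_bounded_unit_rank_one_operators: "uniformly_bounded unit_rank_one_operators"
  unfolding uniformly_bounded_def
proof (intro exI ballI)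
  fix T assume "T \<in> unit_rank_one_operators"
  then obtain f y where "T = rank_one f y" "norm f \<le> 1" "norm y \<le> 1"
    by (auto simp: unit_rank_one_operators_def)
  then show "norm T \<le> 1"
    using norm_rank_one_le[of f y] mult_mono[of "norm f" 1 "norm y" 1] by simp
qed

lemma two_concave_if_l2_bounded_unit_rank_one:
  assumes "l2_bounded (unit_rank_one_operators :: ('a::{banach, ordered_real_vector, lattice} \<Rightarrow>\<^sub>L 'b) set)"
    and "y0 \<noteq> (0 :: 'b::{banach, ordered_real_vector, lattice})"
  shows "two_concave TYPE('a)"
proof -
  obtain C where C: "\<And>N x T. \<forall>n<N. T n \<in> (unit_rank_one_operators :: ('a \<Rightarrow>\<^sub>L 'b) set) \<Longrightarrow>
      norm (sqfun N (\<lambda>n. T n (x n))) \<le> C * norm (sqfun N x)"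
    using assms(1) unfolding l2_bounded_def by blast
  obtain v :: 'b where v: "0 \<le> v" "norm v = 1"
    using exists_nonneg_unit_vector[OF assms(2)] .
  show ?thesis
    unfolding two_concave_def
  proof (intro exI allI)
    fix N and x :: "nat \<Rightarrow> 'a"
    have "\<forall>n. \<exists>f :: 'a \<Rightarrow>\<^sub>L real. norm f \<le> 1 \<and> blinfun_apply f (x n) = norm (x n)"
      by (metis norming_functional)
    then obtain f where f: "\<And>n. norm (f n) \<le> 1" "\<And>n. blinfun_apply (f n) (x n) = norm (x n)"
      by metis
    have "sqrt (\<Sum>n<N. (norm (x n))\<^sup>2) = norm (sqfun N (\<lambda>n. rank_one (f n) v (x n)))"
      using v by (simp add: f(2) sqfun_scaleR_nonneg L2_set_def sum_nonneg)
    also have "\<dots> \<le> C * norm (sqfun N x)"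
      using f(1) v(2) by (intro C allI impI rank_one_in_unit_rank_one_operators) auto
    finally show "sqrt (\<Sum>n<N. (norm (x n))\<^sup>2) \<le> C * norm (sqfun N x)" .
  qed
qed

lemma two_convex_if_l2_bounded_unit_rank_one:
  assumes "l2_bounded (unit_rank_one_operators :: ('a \<Rightarrow>\<^sub>L 'b::{banach, ordered_real_vector, lattice}) set)"
    and "x0 \<noteq> (0 :: 'a::{banach, ordered_real_vector, lattice})"
  shows "two_convex TYPE('b)"
proof -
  obtain C where C: "\<And>N x T. \<forall>n<N. T n \<in> (unit_rank_one_operators :: ('a \<Rightarrow>\<^sub>L 'b) set) \<Longrightarrow>
      norm (sqfun N (\<lambda>n. T n (x n))) \<le> C * norm (sqfun N x)"
    using assms(1) unfolding l2_bounded_def by blast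
  obtain u :: 'a where u: "0 \<le> u" "norm u = 1"
    using exists_nonneg_unit_vector[OF assms(2)] .
  obtain f :: "'a \<Rightarrow>\<^sub>L real" where f: "norm f \<le> 1" "f u = 1"
    using norming_functional[of u] u(2) by metis
  show ?thesis
    unfolding two_convex_def
  proof (intro exI allI)
    fix N and y :: "nat \<Rightarrow> 'b"
    define T where "T n = rank_one f (y n /\<^sub>R norm (y n))" for n
    have "T n (norm (y n) *\<^sub>R u) = y n" for n
      using f(2) by (cases "y n = 0") (simp_all add: T_def blinfun.scaleR_right)
    then have "norm (sqfun N y) = norm (sqfun N (\<lambda>n. T n (norm (y n) *\<^sub>R u)))"
      by simp
    also have "\<dots> \<le> C * norm (sqfun N (\<lambda>n. norm (y n) *\<^sub>R u))"
      unfolding T_def using f(1)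
      by (intro C allI impI rank_one_in_unit_rank_one_operators) (simp_all add: field_simps)
    also have "norm (sqfun N (\<lambda>n. norm (y n) *\<^sub>R u)) = sqrt (\<Sum>n<N. (norm (y n))\<^sup>2)"
      using u by (simp add: sqfun_scaleR_nonneg L2_set_def sum_nonneg)
    finally show "norm (sqfun N y) \<le> C * sqrt (\<Sum>n<N. (norm (y n))\<^sup>2)" .
  qed
qed

lemma L2_set_blinfun_apply_le:
  fixes T :: "'i \<Rightarrow> 'a::real_normed_vector \<Rightarrow>\<^sub>L 'b::real_normed_vector"
  assumes "\<And>i. i \<in> A \<Longrightarrow> norm (T i) \<le> M"
  shows "L2_set (\<lambda>i. norm (T i (x i))) A \<le> \<bar>M\<bar> * L2_set (\<lambda>i. norm (x i)) A"
proof -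
  have "norm (T i (x i)) \<le> \<bar>M\<bar> * norm (x i)" if "i \<in> A" for i
    using norm_blinfun[of "T i" "x i"] assms[OF that]
    by (meson abs_ge_self mult_right_mono norm_ge_zero order_trans)
  then show ?thesis by (simp add: L2_set_right_distrib L2_set_mono)
qed

lemma l2_bounded_if_two_concave_two_convex:
  assumes "two_concave TYPE('a::{banach, ordered_real_vector, lattice})"
    and "two_convex TYPE('b::{banach, ordered_real_vector, lattice})"
    and "uniformly_bounded (\<T> :: ('a \<Rightarrow>\<^sub>L 'b) set)"
  shows "l2_bounded \<T>"
proof -
  obtain Cx where Cx: "\<And>N (x :: nat \<Rightarrow> 'a). L2_set (\<lambda>n. norm (x n)) {..<N} \<le> Cx * norm (sqfun N x)"
    using assms(1) by (auto simp: two_concave_def L2_set_def)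
  obtain Cy where Cy: "\<And>N (y :: nat \<Rightarrow> 'b). norm (sqfun N y) \<le> Cy * L2_set (\<lambda>n. norm (y n)) {..<N}"
    using assms(2) by (auto simp: two_convex_def L2_set_def)
  obtain M where M: "\<And>T. T \<in> \<T> \<Longrightarrow> norm T \<le> M"
    using assms(3) by (auto simp: uniformly_bounded_def)
  have "norm (sqfun N (\<lambda>n. T n (x n))) \<le> \<bar>Cy\<bar> * \<bar>M\<bar> * \<bar>Cx\<bar> * norm (sqfun N x)"
    if "\<forall>n<N. T n \<in> \<T>" for N x T
  proof -
    have "norm (sqfun N (\<lambda>n. T n (x n))) \<le> \<bar>Cy\<bar> * L2_set (\<lambda>n. norm (T n (x n))) {..<N}"
      by (rule order_trans[OF Cy mult_right_mono]) simp_all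
    also have "\<dots> \<le> \<bar>Cy\<bar> * (\<bar>M\<bar> * L2_set (\<lambda>n. norm (x n)) {..<N})"
      using that M by (intro mult_left_mono L2_set_blinfun_apply_le) auto
    also have "\<dots> \<le> \<bar>Cy\<bar> * (\<bar>M\<bar> * (\<bar>Cx\<bar> * norm (sqfun N x)))"
      by (intro mult_left_mono order_trans[OF Cx mult_right_mono]) simp_all
    finally show ?thesis by (simp add: mult.assoc)
  qed
  then show ?thesis
    unfolding l2_bounded_def by (intro exI[of _ "\<bar>Cy\<bar> * \<bar>M\<bar> * \<bar>Cx\<bar>"]) auto
qed

theorem mainTheorem10:
  assumes "banach_lattice TYPE('a::{banach, ordered_real_vector, lattice})"
    and "banach_lattice TYPE('b::{banach, ordered_real_vector, lattice})"
    and "\<exists>x::'a. x \<noteq> 0"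
    and "\<exists>y::'b. y \<noteq> 0"
  shows "(\<forall>\<T> :: ('a \<Rightarrow>\<^sub>L 'b) set. uniformly_bounded \<T> \<longrightarrow> l2_bounded \<T>)
         \<longleftrightarrow> (two_concave TYPE('a) \<and> two_convex TYPE('b))"
proof
  assume "\<forall>\<T> :: ('a \<Rightarrow>\<^sub>L 'b) set. uniformly_bounded \<T> \<longrightarrow> l2_bounded \<T>"
  then have bounded: "l2_bounded (unit_rank_one_operators :: ('a \<Rightarrow>\<^sub>L 'b) set)"
    using uniformly_bounded_unit_rank_one_operators by blast
  obtain x0 :: 'a and y0 :: 'b where "x0 \<noteq> 0" "y0 \<noteq> 0"
    using assms(3,4) by blast
  then show "two_concave TYPE('a) \<and> two_convex TYPE('b)"
    using two_concave_if_l2_bounded_unit_rank_one[OF bounded]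
      two_convex_if_l2_bounded_unit_rank_one[OF bounded] by blast
next
  assume "two_concave TYPE('a) \<and> two_convex TYPE('b)"
  then show "\<forall>\<T> :: ('a \<Rightarrow>\<^sub>L 'b) set. uniformly_bounded \<T> \<longrightarrow> l2_bounded \<T>"
    using l2_bounded_if_two_concave_two_convex by blast
qed

end
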